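(* Let $\mathcal{X}=\langle P,K,V\rangle$ be a polyhedral model, $x\in P$, and $\phi,\psi$ SLCS formulas. Then $\mathcal{X},x\models\gamma(\phi,\psi)$ if and only if there is a piecewise linear path $\pi:[0,1]\to P$ with $\pi(0)=x$, $\pi((0,1))\subseteq[\![\phi]\!]$ and $\pi(1)\in[\![\psi]\!]$.
   Context: A $d$-simplex $\sigma\subseteq\mathbb{R}^m$ is the convex hull of $d+1$ affinely independent points $v_0,\dots,v_d$ (its vertices); the simplexes spanned by subsets of the vertices (including the empty simplex) are its faces, and $\tau\preceq\sigma$ means $\tau$ is a face of $\sigma$. The relative interior of $\sigma$ is $\tilde\sigma=\{\sum_i\lambda_iv_i:\lambda_i\in(0,1],\sum_i\lambda_i=1\}$. A simplicial complex $K$ is a finite set of simplexes of $\mathbb{R}^m$ closed under taking faces and such that the intersection of any two of its simplexes is a face of both. Its polyhedron is $|K|=\bigcup K$, with the subspace topology of $\mathbb{R}^m$; $\mathcal{C}$ and $\mathcal{I}$ denote closure and interior in this space. The cells of $K$ are the sets $\tilde\sigma$ for nonempty $\sigma\in K$; they form a partition $\tilde K$ of $|K|$. A path in a space $P$ is a continuous $\pi:[0,1]\to P$; $\pi(S)=\{\pi(s):s\in S\}$. A path $\pi$ is piecewise linear if there are $r_0=0<r_1<\dots<r_k=1$ such that for every $i<k$ and $t\in[0,1]$: $\pi(tr_i+(1-t)r_{i+1})=t\pi(r_i)+(1-t)\pi(r_{i+1})$. Fix a finite set $AP$ of atomic propositions. A polyhedral model is $\mathcal{X}=\langle P,K,V\rangle$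 with $K$ a simplicial complex, $P=|K|$, and $V:AP\to\mathcal{P}(P)$ such that each $V(p)$ is a union of cells of $K$ ($K$ is then called coherent with the model). SLCS formulas: $\phi::=\top\mid p\mid\neg\phi\mid\phi\wedge\phi\mid\Box\phi\mid\gamma(\phi,\phi)$, $p\in AP$. Semantics at $x\in P$, with $[\![\phi]\!]=\{x\in P:\mathcal{X},x\models\phi\}$: $\top$ always holds; $x\models p$ iff $x\in V(p)$; Boolean connectives as usual; $x\models\Box\phi$ iff $x\in\mathcal{I}([\![\phi]\!])$; $x\models\gamma(\phi,\psi)$ iff there is a path $\pi$ in $P$ with $\pi(0)=x$, $\pi((0,1))\subseteq[\![\phi]\!]$ and $\pi(1)\in[\![\psi]\!]$. *)

theory Defs
  imports "HOL-Analysis.Analysis"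
begin

text \<open>Simplexes in a Euclidean space: convex hulls of finite affinely independent
  vertex sets (the empty set gives the empty simplex).\<close>

definition is_simplex :: "'a::euclidean_space set \<Rightarrow> bool" where
  "is_simplex \<sigma> \<longleftrightarrow> (\<exists>V. finite V \<and> \<not> affine_dependent V \<and> \<sigma> = convex hull V)"

definition face_of_simplex :: "'a::euclidean_space set \<Rightarrow> 'a set \<Rightarrow> bool" where
  "face_of_simplex \<tau> \<sigma> \<longleftrightarrow>
     (\<exists>V. finite V \<and> \<not> affine_dependent V \<and> \<sigma> = convex hull V \<and>
          (\<exists>W. W \<subseteq> V \<and> \<tau> = convex hull W))"

definition simplex_relint :: "'a::euclidean_space set \<Rightarrow> 'a set" where
  "simplex_relint \<sigma> = {x. \<exists>V. finite V \<and> \<not> affine_dependent V \<and> \<sigma> = convex hull V \<and>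
      (\<exists>l. (\<forall>v\<in>V. 0 < l v \<and> l v \<le> 1) \<and> sum l V = 1 \<and> x = (\<Sum>v\<in>V. l v *\<^sub>R v))}"

definition simplicial_complex :: "'a::euclidean_space set set \<Rightarrow> bool" where
  "simplicial_complex K \<longleftrightarrow>
     finite K \<and> (\<forall>\<sigma>\<in>K. is_simplex \<sigma>) \<and>
     (\<forall>\<sigma>\<in>K. \<forall>\<tau>. face_of_simplex \<tau> \<sigma> \<longrightarrow> \<tau> \<in> K) \<and>
     (\<forall>\<sigma>\<in>K. \<forall>\<tau>\<in>K. face_of_simplex (\<sigma> \<inter> \<tau>) \<sigma> \<and> face_of_simplex (\<sigma> \<inter> \<tau>) \<tau>)"

definition cells :: "'a::euclidean_space set set \<Rightarrow> 'a set set" where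
  "cells K = {simplex_relint \<sigma> | \<sigma>. \<sigma> \<in> K \<and> \<sigma> \<noteq> {}}"

definition polyhedral_model ::
  "'a::euclidean_space set \<Rightarrow> 'a set set \<Rightarrow> ('p::finite \<Rightarrow> 'a set) \<Rightarrow> bool" where
  "polyhedral_model P K V \<longleftrightarrow> simplicial_complex K \<and> P = \<Union>K \<and>
     (\<forall>p. \<exists>C. C \<subseteq> cells K \<and> V p = \<Union>C)"

datatype 'p slcs = Top | Atom 'p | Neg "'p slcs" | Conj "'p slcs" "'p slcs"
  | Box "'p slcs" | Gamma "'p slcs" "'p slcs"

definition path_in :: "'a::euclidean_space set \<Rightarrow> (real \<Rightarrow> 'a) \<Rightarrow> bool" where
  "path_in P \<pi> \<longleftrightarrow> path \<pi> \<and> path_image \<pi> \<subseteq> P"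

fun sem :: "'a::euclidean_space set \<Rightarrow> ('p \<Rightarrow> 'a set) \<Rightarrow> 'p slcs \<Rightarrow> 'a set" where
  "sem P V Top = P"
| "sem P V (Atom p) = P \<inter> V p"
| "sem P V (Neg \<phi>) = P - sem P V \<phi>"
| "sem P V (Conj \<phi> \<psi>) = sem P V \<phi> \<inter> sem P V \<psi>"
| "sem P V (Box \<phi>) = (top_of_set P) interior_of (sem P V \<phi>)"
| "sem P V (Gamma \<phi> \<psi>) = {x \<in> P. \<exists>\<pi>. path_in P \<pi> \<and> \<pi> 0 = x \<and>
      \<pi> ` {0<..<1} \<subseteq> sem P V \<phi> \<and> \<pi> 1 \<in> sem P V \<psi>}"

definition models :: "'a::euclidean_space set \<Rightarrow> 'a set set \<Rightarrow> ('p \<Rightarrow> 'a set) \<Rightarrow> 'a \<Rightarrow> 'p slcs \<Rightarrow> bool" where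
  "models P K V x \<phi> \<longleftrightarrow> x \<in> sem P V \<phi>"

definition piecewise_linear :: "(real \<Rightarrow> 'a::real_vector) \<Rightarrow> bool" where
  "piecewise_linear \<pi> \<longleftrightarrow> (\<exists>(r::nat \<Rightarrow> real) k. r 0 = 0 \<and> r k = 1 \<and> (\<forall>i<k. r i < r (Suc i)) \<and>
     (\<forall>i<k. \<forall>t\<in>{0..1}. \<pi> (t * r i + (1 - t) * r (Suc i)) = t *\<^sub>R \<pi> (r i) + (1 - t) *\<^sub>R \<pi> (r (Suc i))))"

end

theory Submission
  imports Defs
begin

text \<open>Every denotation is a union of open cells of \<open>K\<close>: this goes by induction on the
  formula, and for \<open>\<gamma>\<close> it uses that two points of one open cell lie in exactly the same
  simplexes. Now let \<open>\<pi>\<close> be a path whose interior lies in such a union \<open>A\<close>. The simplexes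
  whose open cells meet \<open>\<pi>((0,1))\<close> are linked into one chain by inclusion, because
  \<open>\<pi>((0,1))\<close> is connected and covered by finitely many closed simplexes. A straight segment
  from a point of a simplex to a point of its open cell runs inside that open cell, so walking
  along the chain by such segments yields a piecewise linear path inside \<open>A\<close> from \<open>\<pi>(0)\<close>,
  indeed from any point lying in every simplex that contains \<open>\<pi>(0)\<close>, to \<open>\<pi>(1)\<close>.\<close>

lemma simplex_relint_eq_rel_interior:
  assumes "is_simplex \<sigma>" shows "simplex_relint \<sigma> = rel_interior \<sigma>"
proof
  show "simplex_relint \<sigma> \<subseteq> rel_interior \<sigma>"
    unfolding simplex_relint_def using rel_interior_convex_hull_explicit by fastforce
next
  show "rel_interior \<sigma> \<subseteq> simplex_relint \<sigma>"
  proof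
    fix x assume x: "x \<in> rel_interior \<sigma>"
    obtain V where V: "finite V" "\<not> affine_dependent V" "\<sigma> = convex hull V"
      using assms unfolding is_simplex_def by blast
    then obtain u where u: "\<forall>v\<in>V. 0 < u v" "sum u V = 1" "(\<Sum>v\<in>V. u v *\<^sub>R v) = x"
      using x rel_interior_convex_hull_explicit[OF V(2)] by auto
    have "u v \<le> 1" if "v \<in> V" for v
      using member_le_sum[of v V u] that u V(1) by (auto intro: less_imp_le)
    then show "x \<in> simplex_relint \<sigma>"
      unfolding simplex_relint_def using V u by blast
  qed
qed

definition affine_between :: "(real \<Rightarrow> 'a::real_vector) \<Rightarrow> real \<Rightarrow> real \<Rightarrow> bool" where
  "affine_between \<pi> a b \<longleftrightarrow>
     (\<forall>t\<in>{0..1}. \<pi> (t * a + (1 - t) * b) = t *\<^sub>R \<pi> a + (1 - t) *\<^sub>R \<pi> b)"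

lemma piecewise_linear_iff_affine_between:
  "piecewise_linear \<pi> \<longleftrightarrow> (\<exists>(r::nat \<Rightarrow> real) k. r 0 = 0 \<and> r k = 1 \<and>
     (\<forall>i<k. r i < r (Suc i)) \<and> (\<forall>i<k. affine_between \<pi> (r i) (r (Suc i))))"
  unfolding piecewise_linear_def affine_between_def ..

lemma affine_between_reparam:
  assumes "affine_between \<pi> a b" "a \<in> {l..u}" "b \<in> {l..u}"
    and "\<And>s. s \<in> {l..u} \<Longrightarrow> \<rho> (c * s + d) = \<pi> s"
  shows "affine_between \<rho> (c * a + d) (c * b + d)"
  unfolding affine_between_def
proof
  fix t :: real assume t: "t \<in> {0..1}"
  have "t * a + (1 - t) * b \<in> {l..u}"
    using convexD[of "{l..u}" a b t "1 - t"] t assms(2,3) by simp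
  moreover have "t * (c * a + d) + (1 - t) * (c * b + d) = c * (t * a + (1 - t) * b) + d"
    by (simp add: algebra_simps)
  ultimately show "\<rho> (t * (c * a + d) + (1 - t) * (c * b + d)) =
      t *\<^sub>R \<rho> (c * a + d) + (1 - t) *\<^sub>R \<rho> (c * b + d)"
    using assms t unfolding affine_between_def by simp
qed

lemma piecewise_linear_linepath: "piecewise_linear (linepath a b)"
  unfolding piecewise_linear_def
  by (rule exI[of _ "\<lambda>i. if i = 0 then 0 else 1"], rule exI[of _ 1])
     (auto simp: linepath_def algebra_simps)

lemma mono_upto:
  fixes r :: "nat \<Rightarrow> real"
  assumes "\<forall>i<k. r i < r (Suc i)" "j \<le> l" "l \<le> k"
  shows "r j \<le> r l"
  using assms(2,3)
proof (induction l rule: dec_induct)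
  case (step l)
  then have "r l < r (Suc l)" using assms(1) by simp
  with step show ?case by simp
qed simp

lemma piecewise_linear_joinpaths:
  fixes p q :: "real \<Rightarrow> 'a::real_normed_vector"
  assumes "piecewise_linear p" "piecewise_linear q" "p 1 = q 0"
  shows "piecewise_linear (p +++ q)"
proof -
  obtain r k where r: "r 0 = 0" "r k = 1" "\<forall>i<k. r i < r (Suc i)"
    "\<forall>i<k. affine_between p (r i) (r (Suc i))"
    using assms(1) unfolding piecewise_linear_iff_affine_between by blast
  obtain r' k' where r': "r' 0 = 0" "r' k' = 1" "\<forall>i<k'. r' i < r' (Suc i)"
    "\<forall>i<k'. affine_between q (r' i) (r' (Suc i))"
    using assms(2) unfolding piecewise_linear_iff_affine_between by blast
  have r_range: "r i \<in> {0..1}" if "i \<le> k" for i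
    using mono_upto[OF r(3), of 0 i] mono_upto[OF r(3), of i k] that r(1,2) by auto
  have r'_range: "r' i \<in> {0..1}" if "i \<le> k'" for i
    using mono_upto[OF r'(3), of 0 i] mono_upto[OF r'(3), of i k'] that r'(1,2) by auto
  \<comment> \<open>the summand \<open>0\<close> keeps the shape \<open>c * s + d\<close> of \<open>affine_between_reparam\<close>\<close>
  have low: "(p +++ q) (1/2 * s + 0) = p s" if "s \<in> {0..1}" for s
    using that by (simp add: joinpaths_def)
  have high: "(p +++ q) (1/2 * s + 1/2) = q s" if "s \<in> {0..1}" for s
    using that assms(3) by (cases "s = 0") (auto simp: joinpaths_def)
  define R where "R i = (if i \<le> k then 1/2 * r i + 0 else 1/2 * r' (i - k) + 1/2)" for i
  have R_low: "R i = 1/2 * r i + 0" if "i \<le> k" for i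
    using that unfolding R_def by simp
  have R_high: "R i = 1/2 * r' (i - k) + 1/2" if "k \<le> i" for i
    using that r(2) r'(1) unfolding R_def by auto
  show ?thesis unfolding piecewise_linear_iff_affine_between
  proof (intro exI conjI allI impI)
    show "R 0 = 0" using R_low[of 0] r(1) by simp
    show "R (k + k') = 1" using R_high[of "k + k'"] r'(2) by simp
  next
    fix i assume i: "i < k + k'"
    show "R i < R (Suc i)"
    proof (cases "i < k")
      case True
      then have "r i < r (Suc i)" using r(3) by simp
      moreover have "R i = 1/2 * r i + 0" "R (Suc i) = 1/2 * r (Suc i) + 0"
        using R_low True by simp_all
      ultimately show ?thesis by (simp only:)
    next
      case False
      then have "Suc i - k = Suc (i - k)" "i - k < k'" using i by auto
      moreover have "r' (i - k) < r' (Suc (i - k))" using r'(3) \<open>i - k < k'\<close> by simp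
      ultimately show ?thesis using R_high[of i] R_high[of "Suc i"] False by simp
    qed
    show "affine_between (p +++ q) (R i) (R (Suc i))"
    proof (cases "i < k")
      case True
      have "affine_between (p +++ q) (1/2 * r i + 0) (1/2 * r (Suc i) + 0)"
        by (rule affine_between_reparam[where l = 0 and u = 1]) (use True r(4) r_range low in auto)
      moreover have "R i = 1/2 * r i + 0" "R (Suc i) = 1/2 * r (Suc i) + 0"
        using R_low True by simp_all
      ultimately show ?thesis by (simp only:)
    next
      case False
      then have "Suc i - k = Suc (i - k)" "i - k < k'" using i by auto
      have "affine_between (p +++ q) (1/2 * r' (i - k) + 1/2) (1/2 * r' (Suc (i - k)) + 1/2)"
        by (rule affine_between_reparam[where l = 0 and u = 1]) (use \<open>i - k < k'\<close> r'(4) r'_range high in auto)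
      moreover have "R i = 1/2 * r' (i - k) + 1/2" "R (Suc i) = 1/2 * r' (Suc (i - k)) + 1/2"
        using R_high False \<open>Suc i - k = Suc (i - k)\<close> by simp_all
      ultimately show ?thesis by (simp only:)
    qed
  qed
qed

definition pl_path_between :: "'a::euclidean_space set \<Rightarrow> 'a set \<Rightarrow> 'a \<Rightarrow> 'a \<Rightarrow> bool" where
  "pl_path_between P A p q \<longleftrightarrow>
     (\<exists>\<pi>. path_in P \<pi> \<and> piecewise_linear \<pi> \<and> \<pi> 0 = p \<and> \<pi> 1 = q \<and> \<pi> ` {0<..<1} \<subseteq> A)"

lemma pl_path_between_linepath:
  assumes "closed_segment p q \<subseteq> P" "linepath p q ` {0<..<1} \<subseteq> A"
  shows "pl_path_between P A p q"
proof -
  have "path_in P (linepath p q)" using assms(1) unfolding path_in_def by simp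
  moreover have "linepath p q 0 = p" "linepath p q 1 = q" by (simp_all add: linepath_def)
  ultimately show ?thesis
    using assms(2) piecewise_linear_linepath unfolding pl_path_between_def by blast
qed

lemma pl_path_between_trans:
  assumes "pl_path_between P A p q" "pl_path_between P A q r" "q \<in> A"
  shows "pl_path_between P A p r"
proof -
  obtain \<pi>1 where \<pi>1: "path_in P \<pi>1" "piecewise_linear \<pi>1" "\<pi>1 0 = p" "\<pi>1 1 = q"
    "\<pi>1 ` {0<..<1} \<subseteq> A"
    using assms(1) unfolding pl_path_between_def by blast
  obtain \<pi>2 where \<pi>2: "path_in P \<pi>2" "piecewise_linear \<pi>2" "\<pi>2 0 = q" "\<pi>2 1 = r"
    "\<pi>2 ` {0<..<1} \<subseteq> A"
    using assms(2) unfolding pl_path_between_def by blast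
  have "(\<pi>1 +++ \<pi>2) ` {0<..<1} \<subseteq> A"
  proof (rule image_subsetI)
    fix s :: real assume s: "s \<in> {0<..<1}"
    consider "s < 1/2" | "s = 1/2" | "s > 1/2" by linarith
    then show "(\<pi>1 +++ \<pi>2) s \<in> A"
    proof cases
      case 1
      then have "2 * s \<in> {0<..<1}" using s by simp
      then show ?thesis using 1 \<pi>1(5) by (auto simp: joinpaths_def)
    next
      case 2
      then have "2 * s = 1" by simp
      then have "(\<pi>1 +++ \<pi>2) s = \<pi>1 1" by (simp add: joinpaths_def)
      then show ?thesis using \<pi>1(4) assms(3) by simp
    next
      case 3
      then have "2 * s - 1 \<in> {0<..<1}" using s by simp
      then show ?thesis using 3 \<pi>2(5) by (auto simp: joinpaths_def)
    qed
  qed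
  moreover have "path_in P (\<pi>1 +++ \<pi>2)"
  proof -
    have "pathfinish \<pi>1 = pathstart \<pi>2" using \<pi>1(4) \<pi>2(3) by (simp add: pathfinish_def pathstart_def)
    then show ?thesis using \<pi>1(1) \<pi>2(1) path_image_join_subset[of \<pi>1 \<pi>2]
      unfolding path_in_def by auto
  qed
  moreover have "piecewise_linear (\<pi>1 +++ \<pi>2)"
    using piecewise_linear_joinpaths \<pi>1(2,4) \<pi>2(2,3) by metis
  moreover have "(\<pi>1 +++ \<pi>2) 0 = p" "(\<pi>1 +++ \<pi>2) 1 = r"
    using \<pi>1(3) \<pi>2(4) by (simp_all add: joinpaths_def)
  ultimately show ?thesis unfolding pl_path_between_def by blast
qed

locale simplicial =
  fixes K :: "'a::euclidean_space set set"
  assumes simplicial_complex: "simplicial_complex K"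
begin

lemma finite_K: "finite K"
  using simplicial_complex unfolding simplicial_complex_def by blast

lemma simplex_hull:
  assumes "\<sigma> \<in> K"
  obtains V where "finite V" "\<not> affine_dependent V" "\<sigma> = convex hull V"
  using assms simplicial_complex unfolding simplicial_complex_def is_simplex_def by blast

lemma convex_simplex: "\<sigma> \<in> K \<Longrightarrow> convex \<sigma>"
  by (metis simplex_hull convex_convex_hull)

lemma closed_simplex: "\<sigma> \<in> K \<Longrightarrow> closed \<sigma>"
  by (metis simplex_hull compact_convex_hull finite_imp_compact compact_imp_closed)

lemma closed_Union_simplices: "K' \<subseteq> K \<Longrightarrow> closed (\<Union>K')"
  using finite_K closed_simplex by (meson closed_Union finite_subset subsetD)

lemma face_in_K:
  assumes "\<sigma> \<in> K" "T face_of \<sigma>" shows "T \<in> K"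
proof -
  obtain V where V: "finite V" "\<not> affine_dependent V" "\<sigma> = convex hull V"
    using simplex_hull[OF assms(1)] by blast
  then obtain W where "W \<subseteq> V" "T = convex hull W"
    using assms(2) face_of_convex_hull_affine_independent[OF V(2)] by blast
  then have "face_of_simplex T \<sigma>" unfolding face_of_simplex_def using V by blast
  then show ?thesis using simplicial_complex assms(1) unfolding simplicial_complex_def by blast
qed

lemma Int_face_of:
  assumes "\<sigma> \<in> K" "\<tau> \<in> K" shows "(\<sigma> \<inter> \<tau>) face_of \<sigma>"
proof -
  have "face_of_simplex (\<sigma> \<inter> \<tau>) \<sigma>"
    using simplicial_complex assms unfolding simplicial_complex_def by blast
  then show ?thesis
    unfolding face_of_simplex_def by (metis face_of_convex_hull_affine_independent)
qed

lemma cells_eq_rel_interiors: "cells K = {rel_interior \<sigma> | \<sigma>. \<sigma> \<in> K \<and> \<sigma> \<noteq> {}}"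
  unfolding cells_def using simplex_relint_eq_rel_interior simplicial_complex
  unfolding simplicial_complex_def by metis

lemma mem_rel_interior_face:
  assumes "\<sigma> \<in> K" "y \<in> \<sigma>"
  obtains \<rho> where "\<rho> \<in> K" "\<rho> \<subseteq> \<sigma>" "y \<in> rel_interior \<rho>"
proof -
  obtain V where V: "finite V" "\<not> affine_dependent V" "\<sigma> = convex hull V"
    using simplex_hull[OF assms(1)] by blast
  then obtain u where u: "\<forall>v\<in>V. 0 \<le> u v" "sum u V = 1" "(\<Sum>v\<in>V. u v *\<^sub>R v) = y"
    using assms(2) convex_hull_finite[OF V(1)] by auto
  define W where "W = {v\<in>V. 0 < u v}"
  have WV: "W \<subseteq> V" unfolding W_def by auto
  have zero: "\<forall>v\<in>V - W. u v = 0" using u(1) unfolding W_def by force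
  have "sum u W = 1" using sum.mono_neutral_left[OF V(1) WV zero] u(2) by simp
  moreover have "(\<Sum>v\<in>W. u v *\<^sub>R v) = y"
    using sum.mono_neutral_left[OF V(1) WV, of "\<lambda>v. u v *\<^sub>R v"] zero u(3) by simp
  moreover have "\<not> affine_dependent W" using V(2) WV affine_dependent_subset by blast
  ultimately have "y \<in> rel_interior (convex hull W)"
    using rel_interior_convex_hull_explicit unfolding W_def by blast
  moreover have "convex hull W face_of \<sigma>"
    using face_of_convex_hull_affine_independent[OF V(2)] V(3) WV by blast
  ultimately show ?thesis using that face_in_K[OF assms(1)] face_of_imp_subset by blast
qed

lemma subset_if_rel_interior_meets:
  assumes "\<sigma> \<in> K" "\<tau> \<in> K" "y \<in> rel_interior \<sigma>" "y \<in> \<tau>"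
  shows "\<sigma> \<subseteq> \<tau>"
proof (rule ccontr)
  assume "\<not> \<sigma> \<subseteq> \<tau>"
  then have "(\<sigma> \<inter> \<tau>) \<inter> rel_interior \<sigma> = {}"
    using face_of_disjoint_rel_interior Int_face_of assms(1,2) by blast
  then show False using assms(3,4) rel_interior_subset by blast
qed

lemma rel_interiors_disjoint:
  assumes "\<sigma> \<in> K" "\<tau> \<in> K" "y \<in> rel_interior \<sigma>" "y \<in> rel_interior \<tau>"
  shows "\<sigma> = \<tau>"
  using subset_if_rel_interior_meets assms rel_interior_subset by (metis subset_antisym subsetD)

lemma rel_interior_subset_Union: "\<sigma> \<in> K \<Longrightarrow> rel_interior \<sigma> \<subseteq> \<Union>K"
  using rel_interior_subset by blast

lemma pl_path_between_in_simplex: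
  assumes "\<sigma> \<in> K" "rel_interior \<sigma> \<subseteq> A" "p \<in> \<sigma>" "q \<in> \<sigma>"
    and "p \<in> rel_interior \<sigma> \<or> q \<in> rel_interior \<sigma>"
  shows "pl_path_between (\<Union>K) A p q"
proof (rule pl_path_between_linepath)
  show "closed_segment p q \<subseteq> \<Union>K"
    using closed_segment_subset[OF assms(3,4) convex_simplex[OF assms(1)]] assms(1) by blast
  have "open_segment p q \<subseteq> rel_interior \<sigma>"
    using assms(3-5) rel_interior_closure_convex_segment[OF convex_simplex[OF assms(1)]]
      closure_subset open_segment_commute by blast
  then show "linepath p q ` {0<..<1} \<subseteq> A"
  proof (cases "p = q")
    case False
    then show ?thesis
      using linepath_in_open_segment \<open>open_segment p q \<subseteq> rel_interior \<sigma>\<close> assms(2) by fast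
  next
    case True
    then show ?thesis using assms(2,5) by (auto simp: linepath_refl)
  qed
qed

definition cell_saturated :: "'a set \<Rightarrow> bool" where
  "cell_saturated A \<longleftrightarrow> A \<subseteq> \<Union>K \<and> (\<forall>\<sigma>\<in>K. rel_interior \<sigma> \<inter> A \<noteq> {} \<longrightarrow> rel_interior \<sigma> \<subseteq> A)"

definition simplices_meeting :: "'a set \<Rightarrow> 'a set set" where
  "simplices_meeting Y = {\<sigma>\<in>K. rel_interior \<sigma> \<inter> Y \<noteq> {}}"

definition nested_pairs :: "'a set \<Rightarrow> ('a set \<times> 'a set) set" where
  "nested_pairs Y = {(\<sigma>, \<tau>). \<sigma> \<in> simplices_meeting Y \<and> \<tau> \<in> simplices_meeting Y \<and> (\<sigma> \<subseteq> \<tau> \<or> \<tau> \<subseteq> \<sigma>)}"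

lemma simplices_meeting_chain:
  assumes "connected Y" "Y \<subseteq> \<Union>K" "\<sigma>0 \<in> simplices_meeting Y" "\<sigma>1 \<in> simplices_meeting Y"
  shows "(\<sigma>0, \<sigma>1) \<in> (nested_pairs Y)\<^sup>*"
proof (rule ccontr)
  assume not_reached: "(\<sigma>0, \<sigma>1) \<notin> (nested_pairs Y)\<^sup>*"
  define F where "F = simplices_meeting Y"
  define G where "G = {\<tau>. (\<sigma>0, \<tau>) \<in> (nested_pairs Y)\<^sup>*}"
  have F_sub: "F \<subseteq> K" unfolding F_def simplices_meeting_def by blast
  have G_sub: "G \<subseteq> F"
    using assms(3) unfolding G_def F_def by (auto elim: rtranclE simp: nested_pairs_def)
  have cell: "\<exists>\<rho>\<in>F. w \<in> rel_interior \<rho>" if w: "w \<in> Y" for w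
  proof -
    obtain \<sigma> where "\<sigma> \<in> K" "w \<in> \<sigma>" using assms(2) w by blast
    then obtain \<rho> where "\<rho> \<in> K" "w \<in> rel_interior \<rho>" using mem_rel_interior_face by metis
    then show ?thesis using w unfolding F_def simplices_meeting_def by blast
  qed
  have "\<Union>G \<inter> \<Union>(F - G) \<inter> Y = {}"
  proof (rule ccontr)
    assume "\<Union>G \<inter> \<Union>(F - G) \<inter> Y \<noteq> {}"
    then obtain w \<tau>1 \<tau>2 where w: "w \<in> Y" "\<tau>1 \<in> G" "w \<in> \<tau>1" "\<tau>2 \<in> F" "\<tau>2 \<notin> G" "w \<in> \<tau>2"
      by blast
    obtain \<rho> where \<rho>: "\<rho> \<in> F" "w \<in> rel_interior \<rho>" using cell w(1) by blast
    have "\<rho> \<subseteq> \<tau>1" "\<rho> \<subseteq> \<tau>2"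
      using subset_if_rel_interior_meets \<rho> w G_sub F_sub by blast+
    then have "(\<tau>1, \<rho>) \<in> nested_pairs Y" "(\<rho>, \<tau>2) \<in> nested_pairs Y"
      using \<rho>(1) w(2,4) G_sub unfolding nested_pairs_def F_def by auto
    then have "\<tau>2 \<in> G" using w(2) unfolding G_def by (simp add: rtrancl_into_rtrancl)
    then show False using w(5) by blast
  qed
  moreover have "Y \<subseteq> \<Union>G \<union> \<Union>(F - G)"
    using cell rel_interior_subset by blast
  moreover have "closed (\<Union>G)" "closed (\<Union>(F - G))"
    using G_sub F_sub by (auto intro!: closed_Union_simplices)
  moreover have "\<Union>G \<inter> Y \<noteq> {}"
    using assms(3) rel_interior_subset unfolding G_def simplices_meeting_def by blast
  moreover have "\<Union>(F - G) \<inter> Y \<noteq> {}"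
    using assms(4) not_reached rel_interior_subset unfolding G_def F_def simplices_meeting_def
    by blast
  ultimately show False using connected_closedD[OF assms(1)] by blast
qed

lemma pl_path_along_chain:
  assumes "\<forall>\<sigma>\<in>simplices_meeting Y. rel_interior \<sigma> \<subseteq> A"
    and "\<sigma>0 \<in> simplices_meeting Y" "z \<in> \<sigma>0"
    and "(\<sigma>0, \<tau>) \<in> (nested_pairs Y)\<^sup>*" "b \<in> rel_interior \<tau>"
  shows "pl_path_between (\<Union>K) A z b"
  using assms(4,5)
proof (induction arbitrary: b rule: rtrancl_induct)
  case base
  then show ?case
    using assms(1-3) rel_interior_subset pl_path_between_in_simplex
    unfolding simplices_meeting_def by blast
next
  case (step \<tau> \<rho>)
  have \<tau>: "\<tau> \<in> simplices_meeting Y" and \<rho>: "\<rho> \<in> simplices_meeting Y"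
    and nested: "\<tau> \<subseteq> \<rho> \<or> \<rho> \<subseteq> \<tau>"
    using step.hyps(2) unfolding nested_pairs_def by auto
  obtain c where c: "c \<in> rel_interior \<tau>"
    using \<tau> unfolding simplices_meeting_def by blast
  have "pl_path_between (\<Union>K) A c b"
    using nested
  proof
    assume "\<tau> \<subseteq> \<rho>"
    then show ?thesis
      using pl_path_between_in_simplex[of \<rho> A c b] \<rho> c step.prems assms(1) rel_interior_subset
      unfolding simplices_meeting_def by blast
  next
    assume "\<rho> \<subseteq> \<tau>"
    then show ?thesis
      using pl_path_between_in_simplex[of \<tau> A c b] \<tau> c step.prems assms(1) rel_interior_subset
      unfolding simplices_meeting_def by blast
  qed
  moreover have "c \<in> A" using assms(1) \<tau> c by blast
  ultimately show ?case using step.IH[OF c] pl_path_between_trans by blast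
qed

lemma path_start_simplex:
  assumes "path_in (\<Union>K) \<pi>"
  obtains \<sigma> t where "\<sigma> \<in> K" "\<pi> 0 \<in> \<sigma>" "t \<in> {0<..<1}" "\<pi> t \<in> rel_interior \<sigma>"
proof -
  define C where "C = \<Union>{\<sigma>\<in>K. \<pi> 0 \<notin> \<sigma>}"
  have "(\<pi> \<longlongrightarrow> \<pi> 0) (at_right 0)"
    using assms unfolding path_in_def path_def by (intro continuous_on_Icc_at_rightD) auto
  moreover have "open (- C)"
    unfolding C_def by (intro open_Compl closed_Union_simplices) blast
  moreover have "\<pi> 0 \<in> - C" unfolding C_def by blast
  ultimately have "\<forall>\<^sub>F s in at_right 0. \<pi> s \<in> - C"
    by (rule topological_tendstoD)
  then obtain b :: real where b: "b > 0" "\<And>s. 0 < s \<Longrightarrow> s < b \<Longrightarrow> \<pi> s \<notin> C"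
    unfolding eventually_at_right_field by blast
  define t where "t = min b 1 / 2"
  have "t \<in> {0<..<1}" "t < b" unfolding t_def using b(1) by auto
  then have t: "t \<in> {0<..<1}" "\<pi> t \<notin> C" using b(2) by auto
  then have "\<pi> t \<in> path_image \<pi>" unfolding path_image_def by auto
  then have "\<pi> t \<in> \<Union>K" using assms unfolding path_in_def by blast
  then obtain \<rho> where \<rho>: "\<rho> \<in> K" "\<pi> t \<in> rel_interior \<rho>"
    by (meson UnionE mem_rel_interior_face)
  have "\<pi> 0 \<in> \<rho>"
  proof (rule ccontr)
    assume "\<pi> 0 \<notin> \<rho>"
    then have "\<rho> \<subseteq> C" using \<rho>(1) unfolding C_def by blast
    then show False using t(2) \<rho>(2) rel_interior_subset by blast
  qed
  then show ?thesis using that \<rho> t(1) by blast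
qed

lemma pl_path_from_path:
  assumes "cell_saturated A" "path_in (\<Union>K) \<pi>" "\<pi> ` {0<..<1} \<subseteq> A"
    and "\<forall>\<tau>\<in>K. \<pi> 0 \<in> \<tau> \<longrightarrow> z \<in> \<tau>"
  shows "pl_path_between (\<Union>K) A z (\<pi> 1)"
proof -
  define Y where "Y = \<pi> ` {0<..<1}"
  obtain \<sigma>0 t0 where \<sigma>0: "\<sigma>0 \<in> K" "\<pi> 0 \<in> \<sigma>0" "t0 \<in> {0<..<1}" "\<pi> t0 \<in> rel_interior \<sigma>0"
    using path_start_simplex[OF assms(2)] .
  have "path_in (\<Union>K) (reversepath \<pi>)" using assms(2) unfolding path_in_def by simp
  then obtain \<sigma>1 t1 where "\<sigma>1 \<in> K" "reversepath \<pi> 0 \<in> \<sigma>1" "t1 \<in> {0<..<1}"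
    "reversepath \<pi> t1 \<in> rel_interior \<sigma>1"
    by (rule path_start_simplex)
  then have \<sigma>1: "\<sigma>1 \<in> K" "\<pi> 1 \<in> \<sigma>1" "1 - t1 \<in> {0<..<1}" "\<pi> (1 - t1) \<in> rel_interior \<sigma>1"
    unfolding reversepath_def by auto
  have meeting: "\<sigma>0 \<in> simplices_meeting Y" "\<sigma>1 \<in> simplices_meeting Y"
    using \<sigma>0 \<sigma>1 unfolding simplices_meeting_def Y_def by blast+
  have in_A: "\<forall>\<sigma>\<in>simplices_meeting Y. rel_interior \<sigma> \<subseteq> A"
    using assms(1,3) unfolding cell_saturated_def simplices_meeting_def Y_def by blast
  have "connected Y" "Y \<subseteq> \<Union>K"
    using assms(2) unfolding Y_def path_in_def path_def path_image_def
    by (auto intro!: connected_continuous_image intro: continuous_on_subset)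
  then have "(\<sigma>0, \<sigma>1) \<in> (nested_pairs Y)\<^sup>*"
    using simplices_meeting_chain meeting by blast
  then have "pl_path_between (\<Union>K) A z (\<pi> (1 - t1))"
    using pl_path_along_chain in_A meeting(1) assms(4) \<sigma>0(1,2) \<sigma>1(4) by blast
  moreover have "pl_path_between (\<Union>K) A (\<pi> (1 - t1)) (\<pi> 1)"
    using pl_path_between_in_simplex \<sigma>1 in_A meeting(2) rel_interior_subset by blast
  moreover have "\<pi> (1 - t1) \<in> A" using assms(3) \<sigma>1(3) by blast
  ultimately show ?thesis using pl_path_between_trans by blast
qed

lemma cell_saturated_Union: "cell_saturated (\<Union>K)"
  unfolding cell_saturated_def using rel_interior_subset_Union by blast

lemma cell_saturated_Diff:
  assumes "cell_saturated A" shows "cell_saturated (\<Union>K - A)"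
  using assms rel_interior_subset_Union unfolding cell_saturated_def by blast

lemma cell_saturated_Int:
  assumes "cell_saturated A" "cell_saturated B" shows "cell_saturated (A \<inter> B)"
  using assms unfolding cell_saturated_def by blast

lemma cell_saturated_Union_cells:
  assumes "C \<subseteq> cells K" shows "cell_saturated (\<Union>K \<inter> \<Union>C)"
  unfolding cell_saturated_def
proof (intro conjI ballI impI)
  fix \<sigma> assume \<sigma>: "\<sigma> \<in> K" "rel_interior \<sigma> \<inter> (\<Union>K \<inter> \<Union>C) \<noteq> {}"
  then obtain w c where w: "w \<in> rel_interior \<sigma>" "c \<in> C" "w \<in> c" by blast
  then obtain \<tau> where "\<tau> \<in> K" "c = rel_interior \<tau>" using assms cells_eq_rel_interiors by auto
  then have "c = rel_interior \<sigma>" using rel_interiors_disjoint \<sigma>(1) w by blast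
  then show "rel_interior \<sigma> \<subseteq> \<Union>K \<inter> \<Union>C" using w(2) rel_interior_subset_Union \<sigma>(1) by blast
qed blast

definition open_star :: "'a set \<Rightarrow> 'a set" where
  "open_star \<sigma> = \<Union>{rel_interior \<tau> | \<tau>. \<tau> \<in> K \<and> \<sigma> \<subseteq> \<tau>}"

lemma open_star_eq: "open_star \<sigma> = \<Union>K - \<Union>{\<tau>\<in>K. \<not> \<sigma> \<subseteq> \<tau>}"
proof
  show "open_star \<sigma> \<subseteq> \<Union>K - \<Union>{\<tau>\<in>K. \<not> \<sigma> \<subseteq> \<tau>}"
  proof
    fix w assume "w \<in> open_star \<sigma>"
    then obtain \<tau> where \<tau>: "\<tau> \<in> K" "\<sigma> \<subseteq> \<tau>" "w \<in> rel_interior \<tau>"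
      unfolding open_star_def by blast
    have "\<sigma> \<subseteq> \<tau>'" if "\<tau>' \<in> K" "w \<in> \<tau>'" for \<tau>'
      using subset_if_rel_interior_meets[OF \<tau>(1) that(1) \<tau>(3) that(2)] \<tau>(2) by blast
    then show "w \<in> \<Union>K - \<Union>{\<tau>\<in>K. \<not> \<sigma> \<subseteq> \<tau>}"
      using \<tau>(1,3) rel_interior_subset by blast
  qed
  show "\<Union>K - \<Union>{\<tau>\<in>K. \<not> \<sigma> \<subseteq> \<tau>} \<subseteq> open_star \<sigma>"
  proof
    fix w assume w: "w \<in> \<Union>K - \<Union>{\<tau>\<in>K. \<not> \<sigma> \<subseteq> \<tau>}"
    then obtain \<tau> where "\<tau> \<in> K" "w \<in> \<tau>" by blast
    then obtain \<rho> where \<rho>: "\<rho> \<in> K" "w \<in> rel_interior \<rho>"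
      using mem_rel_interior_face by metis
    moreover have "w \<in> \<rho>" using \<rho>(2) rel_interior_subset by blast
    ultimately have "\<sigma> \<subseteq> \<rho>" using w by blast
    then show "w \<in> open_star \<sigma>" unfolding open_star_def using \<rho> by blast
  qed
qed

lemma openin_open_star: "openin (top_of_set (\<Union>K)) (open_star \<sigma>)"
proof -
  have "closedin (top_of_set (\<Union>K)) (\<Union>{\<tau>\<in>K. \<not> \<sigma> \<subseteq> \<tau>})"
    using closed_Union_simplices by (intro closed_subset) auto
  then show ?thesis unfolding open_star_eq by (intro openin_diff) auto
qed

lemma cell_saturated_interior_of:
  assumes "cell_saturated A" shows "cell_saturated (top_of_set (\<Union>K) interior_of A)"
  unfolding cell_saturated_def
proof (intro conjI ballI impI)
  show "top_of_set (\<Union>K) interior_of A \<subseteq> \<Union>K"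
    using interior_of_subset_topspace by fastforce
next
  fix \<sigma> assume \<sigma>: "\<sigma> \<in> K" "rel_interior \<sigma> \<inter> top_of_set (\<Union>K) interior_of A \<noteq> {}"
  then obtain y U where y: "y \<in> rel_interior \<sigma>" "y \<in> U" "U \<subseteq> A"
    and U: "openin (top_of_set (\<Union>K)) U"
    unfolding interior_of_def by blast
  obtain T where T: "open T" "U = \<Union>K \<inter> T" using U openin_open by blast
  have "rel_interior \<tau> \<subseteq> A" if \<tau>: "\<tau> \<in> K" "\<sigma> \<subseteq> \<tau>" for \<tau>
  proof -
    have "y \<in> closure (rel_interior \<tau>)"
      using y(1) \<tau> rel_interior_subset convex_closure_rel_interior[OF convex_simplex]
        closure_closed[OF closed_simplex] by (metis subsetD)
    then have "T \<inter> rel_interior \<tau> \<noteq> {}"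
      using y(2) T open_Int_closure_eq_empty by blast
    then have "rel_interior \<tau> \<inter> A \<noteq> {}"
      using T(2) y(3) \<tau>(1) rel_interior_subset_Union by blast
    then show ?thesis using assms \<tau>(1) unfolding cell_saturated_def by blast
  qed
  then have "open_star \<sigma> \<subseteq> A" unfolding open_star_def by blast
  moreover have "rel_interior \<sigma> \<subseteq> open_star \<sigma>" unfolding open_star_def using \<sigma>(1) by blast
  ultimately show "rel_interior \<sigma> \<subseteq> top_of_set (\<Union>K) interior_of A"
    using openin_open_star unfolding interior_of_def by blast
qed

lemma cell_saturated_reachable:
  assumes "cell_saturated A"
  shows "cell_saturated {x \<in> \<Union>K. \<exists>\<pi>. path_in (\<Union>K) \<pi> \<and> \<pi> 0 = x \<and> \<pi> ` {0<..<1} \<subseteq> A \<and> \<pi> 1 \<in> B}"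
    (is "cell_saturated ?S")
  unfolding cell_saturated_def
proof (intro conjI ballI impI)
  fix \<sigma> assume \<sigma>: "\<sigma> \<in> K" "rel_interior \<sigma> \<inter> ?S \<noteq> {}"
  then obtain \<pi> where \<pi>: "path_in (\<Union>K) \<pi>" "\<pi> 0 \<in> rel_interior \<sigma>" "\<pi> ` {0<..<1} \<subseteq> A"
    "\<pi> 1 \<in> B"
    by blast
  show "rel_interior \<sigma> \<subseteq> ?S"
  proof
    fix z assume z: "z \<in> rel_interior \<sigma>"
    have "\<forall>\<tau>\<in>K. \<pi> 0 \<in> \<tau> \<longrightarrow> z \<in> \<tau>"
    proof (intro ballI impI)
      fix \<tau> assume "\<tau> \<in> K" "\<pi> 0 \<in> \<tau>"
      then have "\<sigma> \<subseteq> \<tau>" using subset_if_rel_interior_meets[OF \<sigma>(1) _ \<pi>(2)] by blast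
      then show "z \<in> \<tau>" using z rel_interior_subset by blast
    qed
    then obtain \<pi>' where "path_in (\<Union>K) \<pi>'" "\<pi>' 0 = z" "\<pi>' ` {0<..<1} \<subseteq> A" "\<pi>' 1 = \<pi> 1"
      using pl_path_from_path[OF assms \<pi>(1,3)] unfolding pl_path_between_def by blast
    moreover have "z \<in> \<Union>K" using z \<sigma>(1) rel_interior_subset by blast
    ultimately show "z \<in> ?S" using \<pi>(4) by (intro CollectI conjI exI[of _ \<pi>']) simp_all
  qed
qed blast

lemma cell_saturated_sem:
  assumes "\<forall>p. \<exists>C. C \<subseteq> cells K \<and> V p = \<Union>C"
  shows "cell_saturated (sem (\<Union>K) V \<phi>)"
proof (induction \<phi>)
  case Top
  show ?case using cell_saturated_Union by simp
next
  case (Atom p)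
  obtain C where "C \<subseteq> cells K" "V p = \<Union>C" using assms by blast
  then show ?case using cell_saturated_Union_cells by simp
next
  case (Neg \<phi>)
  show ?case using cell_saturated_Diff[OF Neg.IH] by simp
next
  case (Conj \<phi> \<psi>)
  show ?case using cell_saturated_Int[OF Conj.IH] by simp
next
  case (Box \<phi>)
  show ?case using cell_saturated_interior_of[OF Box.IH] by simp
next
  case (Gamma \<phi> \<psi>)
  show ?case using cell_saturated_reachable[OF Gamma.IH(1)] by simp
qed

end

theorem mainTheorem6:
  fixes P :: "'a::euclidean_space set" and K :: "'a set set" and V :: "'p::finite \<Rightarrow> 'a set"
    and x :: 'a and \<phi> \<psi> :: "'p slcs"
  assumes "polyhedral_model P K V" and "x \<in> P"
  shows "models P K V x (Gamma \<phi> \<psi>) \<longleftrightarrow>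
    (\<exists>\<pi>. path_in P \<pi> \<and> piecewise_linear \<pi> \<and> \<pi> 0 = x \<and>
         \<pi> ` {0<..<1} \<subseteq> sem P V \<phi> \<and> \<pi> 1 \<in> sem P V \<psi>)"
proof
  have K: "simplicial K" and P: "P = \<Union>K" and V: "\<forall>p. \<exists>C. C \<subseteq> cells K \<and> V p = \<Union>C"
    using assms(1) unfolding polyhedral_model_def simplicial_def by auto
  assume "models P K V x (Gamma \<phi> \<psi>)"
  then obtain \<pi> where \<pi>: "path_in P \<pi>" "\<pi> 0 = x" "\<pi> ` {0<..<1} \<subseteq> sem P V \<phi>" "\<pi> 1 \<in> sem P V \<psi>"
    unfolding models_def by auto
  have "pl_path_between P (sem P V \<phi>) x (\<pi> 1)"
    using simplicial.pl_path_from_path[OF K simplicial.cell_saturated_sem[OF K V]] \<pi> P by blast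
  then show "\<exists>\<pi>. path_in P \<pi> \<and> piecewise_linear \<pi> \<and> \<pi> 0 = x \<and>
      \<pi> ` {0<..<1} \<subseteq> sem P V \<phi> \<and> \<pi> 1 \<in> sem P V \<psi>"
    using \<pi>(4) unfolding pl_path_between_def by metis
qed (use assms(2) in \<open>auto simp: models_def\<close>)

end
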